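(* Let $W$ be a nonnegative, integer-valued random variable with $\mathbb{P}(W=0)=p$. If $W$ has increasing failure rate (IFR), then $$d_{TV}(\mathcal{L}(W),\mathrm{Geom}(p))\leq 1-p(1+\mathbb{E}W).$$
   Context: The failure rate of $W$ is $r_W(j)=\mathbb{P}(W=j)/\mathbb{P}(W>j)$, $j\in\{0,1,2,\ldots\}$; $W$ is IFR if $r_W(j)$ is nondecreasing in $j$. $\mathrm{Geom}(p)$ is the distribution with mass $p(1-p)^k$ at $k=0,1,2,\ldots$. $d_{TV}(\mathcal{L}(U),\mathcal{L}(V))=\sup_{A\subseteq\{0,1,2,\ldots\}}|\mathbb{P}(U\in A)-\mathbb{P}(V\in A)|$. *)

theory Defs
  imports "HOL-Probability.Probability"
begin

text \<open>Failure rate r_W(j) = P(W = j) / P(W > j), valued in the extended reals.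
  Convention: when P(W > j) = 0 the rate is +infinity (the usual convention for
  distributions with bounded support).\<close>
definition failure_rate :: "nat pmf \<Rightarrow> nat \<Rightarrow> ereal" where
  "failure_rate W j =
     (if measure_pmf.prob W {k. k > j} = 0 then \<infinity>
      else ereal (pmf W j / measure_pmf.prob W {k. k > j}))"

definition IFR :: "nat pmf \<Rightarrow> bool" where
  "IFR W \<longleftrightarrow> mono (failure_rate W)"

definition d_TV :: "nat pmf \<Rightarrow> nat pmf \<Rightarrow> real" where
  "d_TV P Q = (SUP A :: nat set. \<bar>measure_pmf.prob P A - measure_pmf.prob Q A\<bar>)"

end

theory Submission
  imports Defs
begin

text \<open>
  Write \<open>T k = P(W \<ge> k)\<close> and \<open>q = 1 - p\<close>. Monotonicity of the failure rate gives
  \<open>r(k) \<ge> r(0) = p / q\<close>, i.e. \<open>p T k \<le> P(W = k)\<close>, hence \<open>T (k+1) \<le> q T k\<close> and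
  \<open>T k \<le> q^k = P(Geom(p) \<ge> k)\<close>. For any event \<open>A\<close> and cut-off \<open>n\<close>, comparing point masses
  below \<open>n\<close> and bounding the geometric mass above \<open>n\<close> by its tail yields
  \<open>P(Geom(p) \<in> A) - P(W \<in> A) \<le> 1 - p (T 0 + \<dots> + T n)\<close>, and \<open>\<Sum>k. T k = 1 + E W\<close>.
\<close>

lemma measure_pmf_atLeast_eq_pmf_plus:
  fixes W :: "nat pmf"
  shows "measure_pmf.prob W {k..} = pmf W k + measure_pmf.prob W {Suc k..}"
proof -
  have "{k..} = {k} \<union> {Suc k..}" by auto
  moreover have "measure_pmf.prob W ({k} \<union> {Suc k..})
                  = measure_pmf.prob W {k} + measure_pmf.prob W {Suc k..}"
    by (rule measure_pmf.finite_measure_Union) auto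
  ultimately show ?thesis by (simp add: measure_pmf_single)
qed

lemma sum_atMost_measure_pmf_atLeast:
  fixes W :: "nat pmf"
  shows "(\<Sum>k\<le>n. measure_pmf.prob W {k..})
           = 1 + (\<Sum>j\<le>n. pmf W j * real j) + real n * measure_pmf.prob W {Suc n..}"
proof (induction n)
  case 0
  then show ?case by (simp add: atLeast_0)
next
  case (Suc n)
  then show ?case
    using measure_pmf_atLeast_eq_pmf_plus[of W "Suc n"] by (simp add: algebra_simps)
qed

lemma IFR_imp_pmf_ge_tail:
  fixes W :: "nat pmf"
  assumes "IFR W"
  shows "pmf W 0 * measure_pmf.prob W {k..} \<le> pmf W k"
proof -
  define T where "T j = measure_pmf.prob W {Suc j..}" for j
  have greater: "{i. j < i} = {Suc j..}" for j by auto
  have tail: "measure_pmf.prob W {k..} = pmf W k + T k"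
    unfolding T_def by (rule measure_pmf_atLeast_eq_pmf_plus)
  have T0: "T 0 = 1 - pmf W 0"
    using measure_pmf_atLeast_eq_pmf_plus[of W 0] by (simp add: T_def atLeast_0)
  have "pmf W 0 * T k \<le> T 0 * pmf W k"
  proof (cases "T k = 0")
    case True
    then show ?thesis by (simp add: T_def)
  next
    case False
    then have Tk: "T k > 0" by (simp add: T_def zero_less_measure_iff)
    have "T k \<le> T 0"
      unfolding T_def by (rule measure_pmf.finite_measure_mono) auto
    then have T0_pos: "T 0 > 0" using Tk by linarith
    have "failure_rate W 0 \<le> failure_rate W k"
      using assms by (simp add: IFR_def mono_def)
    then have "pmf W 0 / T 0 \<le> pmf W k / T k"
      using Tk T0_pos by (simp add: failure_rate_def greater T_def)
    then show ?thesis using Tk T0_pos by (simp add: field_simps)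
  qed
  then show ?thesis
    using tail T0 by (simp add: algebra_simps)
qed

lemma measure_pmf_atLeast_le_power:
  fixes W :: "nat pmf" and p :: real
  assumes "p \<le> 1" and "\<And>k. p * measure_pmf.prob W {k..} \<le> pmf W k"
  shows "measure_pmf.prob W {k..} \<le> (1 - p) ^ k"
proof (induction k)
  case 0
  then show ?case by (simp add: atLeast_0)
next
  case (Suc k)
  have "measure_pmf.prob W {Suc k..} \<le> (1 - p) * measure_pmf.prob W {k..}"
    using measure_pmf_atLeast_eq_pmf_plus[of W k] assms(2)[of k] by (simp add: algebra_simps)
  also have "\<dots> \<le> (1 - p) * (1 - p) ^ k"
    using Suc assms(1) by (intro mult_left_mono) auto
  finally show ?case by simp
qed

lemma sum_atMost_geometric_weights:
  fixes p :: real
  shows "(\<Sum>k\<le>n. p * (1 - p) ^ k) = 1 - (1 - p) ^ Suc n"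
  by (induction n) (auto simp: algebra_simps)

lemma measure_geometric_pmf_atLeast:
  fixes p :: real
  assumes "0 < p" and "p \<le> 1"
  shows "measure_pmf.prob (geometric_pmf p) {k..} = (1 - p) ^ k"
proof (induction k)
  case 0
  then show ?case by (simp add: atLeast_0)
next
  case (Suc k)
  then show ?case
    using measure_pmf_atLeast_eq_pmf_plus[of "geometric_pmf p" k] assms
    by (simp add: algebra_simps)
qed

lemma measure_geometric_pmf_minus_le:
  fixes W :: "nat pmf" and p :: real
  assumes p: "0 < p" "p \<le> 1" and hazard: "\<And>k. p * measure_pmf.prob W {k..} \<le> pmf W k"
  shows "measure_pmf.prob (geometric_pmf p) A - measure_pmf.prob W A
           \<le> 1 - p * (1 + (\<Sum>j\<le>n. pmf W j * real j))"
proof -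
  let ?G = "geometric_pmf p" and ?T = "\<lambda>k. measure_pmf.prob W {k..}" and ?q = "1 - p"
  let ?B = "A \<inter> {..n}"
  have "measure_pmf.prob ?G A \<le> measure_pmf.prob ?G (?B \<union> {Suc n..})"
    by (rule measure_pmf.finite_measure_mono) auto
  also have "\<dots> \<le> measure_pmf.prob ?G ?B + measure_pmf.prob ?G {Suc n..}"
    by (rule measure_subadditive) auto
  also have "\<dots> = (\<Sum>k\<in>?B. p * ?q ^ k) + ?q ^ Suc n"
    using p by (simp add: measure_measure_pmf_finite measure_geometric_pmf_atLeast mult.commute)
  finally have G: "measure_pmf.prob ?G A \<le> (\<Sum>k\<in>?B. p * ?q ^ k) + ?q ^ Suc n" .
  have "(\<Sum>k\<in>?B. pmf W k) = measure_pmf.prob W ?B"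
    by (simp add: measure_measure_pmf_finite)
  also have "\<dots> \<le> measure_pmf.prob W A"
    by (rule measure_pmf.finite_measure_mono) auto
  finally have "measure_pmf.prob ?G A - measure_pmf.prob W A
                  \<le> (\<Sum>k\<in>?B. p * ?q ^ k - pmf W k) + ?q ^ Suc n"
    using G by (simp add: sum_subtractf)
  also have "(\<Sum>k\<in>?B. p * ?q ^ k - pmf W k) \<le> (\<Sum>k\<in>?B. p * (?q ^ k - ?T k))"
    using hazard by (intro sum_mono) (simp add: algebra_simps)
  also have "\<dots> \<le> (\<Sum>k\<le>n. p * (?q ^ k - ?T k))"
    using p measure_pmf_atLeast_le_power[OF p(2) hazard] by (intro sum_mono2) auto
  also have "\<dots> = 1 - ?q ^ Suc n - p * (\<Sum>k\<le>n. ?T k)"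
    by (simp add: right_diff_distrib sum_subtractf sum_distrib_left sum_atMost_geometric_weights)
  finally have "measure_pmf.prob ?G A - measure_pmf.prob W A \<le> 1 - p * (\<Sum>k\<le>n. ?T k)"
    by simp
  also have "\<dots> \<le> 1 - p * (1 + (\<Sum>j\<le>n. pmf W j * real j))"
    using p by (simp add: sum_atMost_measure_pmf_atLeast mult_left_mono)
  finally show ?thesis .
qed

lemma abs_measure_pmf_diff_le:
  fixes W :: "nat pmf" and p :: real
  assumes "0 < p" "p \<le> 1" and "\<And>k. p * measure_pmf.prob W {k..} \<le> pmf W k"
  shows "\<bar>measure_pmf.prob W A - measure_pmf.prob (geometric_pmf p) A\<bar>
           \<le> 1 - p * (1 + (\<Sum>j\<le>n. pmf W j * real j))"
proof -
  have "measure_pmf.prob W A - measure_pmf.prob (geometric_pmf p) A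
      = measure_pmf.prob (geometric_pmf p) (- A) - measure_pmf.prob W (- A)"
    using measure_pmf.prob_compl[of A W] measure_pmf.prob_compl[of A "geometric_pmf p"]
    by (simp add: Compl_eq_Diff_UNIV)
  then show ?thesis
    using measure_geometric_pmf_minus_le[OF assms, of A n]
      measure_geometric_pmf_minus_le[OF assms, of "- A" n]
    by linarith
qed

text \<open>
  If \<open>real\<close> is not integrable the expectation is the junk value \<open>0\<close>, and the \<open>n = 0\<close>
  bound already suffices.
\<close>

lemma le_minus_expectation_of_partial_sums:
  fixes W :: "nat pmf" and c p x :: real
  assumes "0 \<le> p" and bound: "\<And>n. x \<le> c - p * (\<Sum>j\<le>n. pmf W j * real j)"
  shows "x \<le> c - p * measure_pmf.expectation W real"
proof (cases "integrable W real")
  case True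
  have "(\<lambda>j. pmf W j * real j) sums measure_pmf.expectation W real"
  proof -
    have int: "integrable (count_space UNIV) (\<lambda>j. pmf W j * real j)"
      using True by (simp add: integrable_measure_pmf_finite measure_pmf_eq_density
                                integrable_density)
    have "measure_pmf.expectation W real = (\<integral>j. pmf W j * real j \<partial>count_space UNIV)"
      unfolding measure_pmf_eq_density by (subst integral_density) auto
    with int show ?thesis
      by (simp add: integral_count_space_nat summable_sums integrable_count_space_nat_iff
                    summable_rabs_cancel)
  qed
  then have "(\<lambda>n. \<Sum>j\<le>n. pmf W j * real j) \<longlonglongrightarrow> measure_pmf.expectation W real"
    by (simp add: sums_def_le)
  then have "(\<lambda>n. c - p * (\<Sum>j\<le>n. pmf W j * real j))
               \<longlonglongrightarrow> c - p * measure_pmf.expectation W real"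
    by (intro tendsto_intros)
  then show ?thesis
    by (rule tendsto_lowerbound) (use bound in auto)
next
  case False
  then show ?thesis using bound[of 0] by (simp add: not_integrable_integral_eq)
qed

theorem corollary2p1:
  fixes W :: "nat pmf" and p :: real
  assumes "p = pmf W 0"
    and "p > 0"
    and "IFR W"
  shows "d_TV W (geometric_pmf p) \<le> 1 - p * (1 + measure_pmf.expectation W real)"
proof -
  have p_le_1: "p \<le> 1" using assms(1) by (simp add: pmf_le_1)
  have hazard: "p * measure_pmf.prob W {k..} \<le> pmf W k" for k
    using IFR_imp_pmf_ge_tail[OF assms(3)] assms(1) by simp
  have "\<bar>measure_pmf.prob W A - measure_pmf.prob (geometric_pmf p) A\<bar>
          \<le> 1 - p * (1 + (\<Sum>j\<le>n. pmf W j * real j))" for A n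
    by (rule abs_measure_pmf_diff_le[OF assms(2) p_le_1 hazard])
  then have "\<bar>measure_pmf.prob W A - measure_pmf.prob (geometric_pmf p) A\<bar>
               \<le> 1 - p - p * measure_pmf.expectation W real" for A
    using assms(2) by (intro le_minus_expectation_of_partial_sums) (auto simp: algebra_simps)
  then show ?thesis
    unfolding d_TV_def by (intro cSUP_least) (auto simp: algebra_simps)
qed

end
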